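(* Consider the two-individual system under (h1), (h2), (h3), and suppose $M>0$. Let $x_*=-\frac{1-\sqrt{1-(\tanh M)^2}}{\tanh M}$. Then there exists an integer $m\ge1$ such that either individual 2 acts at some time in $(0,(m+1)T]$, or individual 2 has not acted on $[0,mT]$ and $x_2(mT)>x_*$.
   Context: Two-individual model ($n=2$): parameters $\sigma_A,\sigma_S\ge 0$, $\sigma_C>0$, $\mu_S\in[0,1]$, $\mu_C>0$, $r>0$, $\tau\in(0,1)$, $\alpha_1,\alpha_2\in(-1,1)$. States $x_i\in(-1,1)$, $y_i\in[0,1]$, with $\gamma_1=y_2$, $\gamma_2=y_1$. Between action events: $\dot x_i=[\sigma_A\alpha_i+\sigma_S(\gamma_i-\mu_S)]\,\sigma_C(\gamma_i+\mu_C)(1-x_i)(1+x_i)$, $\dot y_i=-ry_i$. Individual $i$ "acts" at time $t$ when $x_i(t)$ reaches $\tau$; immediately afterwards $x_i$ is reset to $0$ and $y_i$ to $1$, and evolution resumes. Hypotheses: (h1) $\sigma_A\alpha_1-\sigma_S\mu_S>0$; (h2) $\sigma_A\alpha_2-\sigma_S\mu_S\le0$; (h3) $x_1(0)=y_1(0)=y_2(0)=0$ and $x_2(0)\in(-1,\tau)$. Constants: $A_1=(\sigma_A\alpha_1-\sigma_S\mu_S)\sigma_C\mu_C$, $T=\tanh^{-1}(\tau)/A_1$, $A=(\sigma_A\alpha_2-\sigma_S\mu_S)\sigma_C\mu_C$, $B=-\frac1r\big[(\sigma_A\alpha_2-\sigma_S\mu_S)\sigma_C+\sigma_S\sigma_C\mu_C\big]$,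 $C=-\frac{\sigma_S\sigma_C}{2r}$, $M=AT+Be^{-rT}+Ce^{-2rT}-B-C$. *)

theory Defs
  imports "HOL-Analysis.Analysis"
begin

definition xfield :: "real \<Rightarrow> real \<Rightarrow> real \<Rightarrow> real \<Rightarrow> real \<Rightarrow> real \<Rightarrow> real \<Rightarrow> real \<Rightarrow> real" where
  "xfield sA sS sC muS muC alpha gamma x =
     (sA * alpha + sS * (gamma - muS)) * sC * (gamma + muC) * (1 - x) * (1 + x)"

text \<open>Solution of the two-individual hybrid system on [0,\<infinity>).
  S1, S2 are the sets of action times of individual 1 and 2.  States are
  right-continuous: at an action time t of individual i, x_i(t) = 0 and y_i(t) = 1
  (the values immediately after the reset), while x_i(s) \<rightarrow> tau as s \<rightarrow> t from the left.
  Between events the ODEs hold (two-sided derivatives off the event times, right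
  derivatives everywhere), and x_i stays below tau, so an individual acts exactly
  when x_i reaches tau.  gamma_1 = y_2, gamma_2 = y_1.\<close>
definition two_ind_solution ::
  "real \<Rightarrow> real \<Rightarrow> real \<Rightarrow> real \<Rightarrow> real \<Rightarrow> real \<Rightarrow> real \<Rightarrow> real \<Rightarrow> real \<Rightarrow>
   (real \<Rightarrow> real) \<Rightarrow> (real \<Rightarrow> real) \<Rightarrow> (real \<Rightarrow> real) \<Rightarrow> (real \<Rightarrow> real) \<Rightarrow>
   real set \<Rightarrow> real set \<Rightarrow> bool" where
  "two_ind_solution sA sS sC muS muC r tau a1 a2 x1 x2 y1 y2 S1 S2 \<longleftrightarrow>
     S1 \<subseteq> {0<..} \<and> S2 \<subseteq> {0<..} \<and>
     (\<forall>b. finite (S1 \<inter> {..b}) \<and> finite (S2 \<inter> {..b})) \<and>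
     (\<forall>t\<ge>0. x1 t \<in> {-1<..<1} \<and> x2 t \<in> {-1<..<1} \<and> y1 t \<in> {0..1} \<and> y2 t \<in> {0..1}) \<and>
     (\<forall>t\<ge>0. x1 t < tau \<and> x2 t < tau) \<and>
     (\<forall>t\<ge>0.
        (x1 has_real_derivative xfield sA sS sC muS muC a1 (y2 t) (x1 t)) (at t within {t..}) \<and>
        (x2 has_real_derivative xfield sA sS sC muS muC a2 (y1 t) (x2 t)) (at t within {t..}) \<and>
        (y1 has_real_derivative (- r * y1 t)) (at t within {t..}) \<and>
        (y2 has_real_derivative (- r * y2 t)) (at t within {t..})) \<and>
     (\<forall>t>0. t \<notin> S1 \<union> S2 \<longrightarrow>
        (x1 has_real_derivative xfield sA sS sC muS muC a1 (y2 t) (x1 t)) (at t) \<and>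
        (x2 has_real_derivative xfield sA sS sC muS muC a2 (y1 t) (x2 t)) (at t) \<and>
        (y1 has_real_derivative (- r * y1 t)) (at t) \<and>
        (y2 has_real_derivative (- r * y2 t)) (at t)) \<and>
     (\<forall>t>0. t \<notin> S1 \<longrightarrow> isCont x1 t \<and> isCont y1 t) \<and>
     (\<forall>t>0. t \<notin> S2 \<longrightarrow> isCont x2 t \<and> isCont y2 t) \<and>
     (\<forall>t\<in>S1. x1 t = 0 \<and> y1 t = 1 \<and> (x1 \<longlongrightarrow> tau) (at_left t)) \<and>
     (\<forall>t\<in>S2. x2 t = 0 \<and> y2 t = 1 \<and> (x2 \<longlongrightarrow> tau) (at_left t))"

definition cA1 :: "real \<Rightarrow> real \<Rightarrow> real \<Rightarrow> real \<Rightarrow> real \<Rightarrow> real \<Rightarrow> real" where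
  "cA1 sA sS sC muS muC a1 = (sA * a1 - sS * muS) * sC * muC"

definition cT :: "real \<Rightarrow> real \<Rightarrow> real \<Rightarrow> real \<Rightarrow> real \<Rightarrow> real \<Rightarrow> real \<Rightarrow> real" where
  "cT sA sS sC muS muC a1 tau = artanh tau / cA1 sA sS sC muS muC a1"

definition cA :: "real \<Rightarrow> real \<Rightarrow> real \<Rightarrow> real \<Rightarrow> real \<Rightarrow> real \<Rightarrow> real" where
  "cA sA sS sC muS muC a2 = (sA * a2 - sS * muS) * sC * muC"

definition cB :: "real \<Rightarrow> real \<Rightarrow> real \<Rightarrow> real \<Rightarrow> real \<Rightarrow> real \<Rightarrow> real \<Rightarrow> real" where
  "cB sA sS sC muS muC r a2 = - (1 / r) * ((sA * a2 - sS * muS) * sC + sS * sC * muC)"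

definition cC :: "real \<Rightarrow> real \<Rightarrow> real \<Rightarrow> real" where
  "cC sS sC r = - (sS * sC) / (2 * r)"

definition cM :: "real \<Rightarrow> real \<Rightarrow> real \<Rightarrow> real \<Rightarrow> real \<Rightarrow> real \<Rightarrow> real \<Rightarrow> real \<Rightarrow> real \<Rightarrow> real" where
  "cM sA sS sC muS muC r tau a1 a2 =
     (let T = cT sA sS sC muS muC a1 tau;
          A = cA sA sS sC muS muC a2;
          B = cB sA sS sC muS muC r a2;
          C = cC sS sC r
      in A * T + B * exp (- r * T) + C * exp (- 2 * r * T) - B - C)"

end

theory Submission
  imports Defs
begin

(* While individual 2 never acts, y2 stays 0, so after each reset individual 1 follows
   artanh x1(t) = A1 (t - s) and therefore acts exactly at the multiples of T.  In artanh
   coordinates the equation for x2 reads  d/dt artanh x2 = A - r B y1 - 2 r C y1^2  with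
   y1 = exp (-r (t - kT)), so artanh x2 grows by A T over the first period and by exactly M
   over every later one.  As M > 0 this would push x2 above tau, which is impossible.  Hence
   individual 2 acts at some time t > 0, and every m with t <= (m + 1) T satisfies the first
   alternative. *)

lemma artanh_real_less:
  fixes x y :: real
  assumes "-1 < x" "x < y" "y < 1"
  shows "artanh x < artanh y"
proof (rule DERIV_pos_imp_increasing[OF \<open>x < y\<close>])
  fix u assume "x \<le> u" "u \<le> y"
  then have "\<bar>u\<bar> < 1" using assms by auto
  then have "1 - u\<^sup>2 > 0" by (simp add: abs_square_less_1)
  show "\<exists>D. DERIV artanh u :> D \<and> D > 0"
  proof (intro exI conjI)
    show "DERIV artanh u :> 1 / (1 - u\<^sup>2)"
      using \<open>\<bar>u\<bar> < 1\<close> by (rule artanh_real_has_field_derivative)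
  qed (use \<open>1 - u\<^sup>2 > 0\<close> in simp)
qed

lemma continuous_on_Icc_if_continuous_right:
  fixes f :: "real \<Rightarrow> real"
  assumes "continuous (at a within {a..}) f" "\<And>t. a < t \<Longrightarrow> t \<le> b \<Longrightarrow> isCont f t"
  shows "continuous_on {a..b} f"
  unfolding continuous_on_eq_continuous_within
proof
  fix t assume "t \<in> {a..b}"
  then consider "t = a" | "a < t" "t \<le> b" by fastforce
  then show "continuous (at t within {a..b}) f"
  proof cases
    case 1
    then show ?thesis using continuous_within_subset[OF assms(1)] by auto
  qed (use assms(2) continuous_at_imp_continuous_within in blast)
qed

lemma first_point_or_bound:
  fixes S :: "real set"
  assumes "finite (S \<inter> {..b})" "a < b"
  obtains e where "a < e" "e \<le> b" "S \<inter> {a<..<e} = {}" "e \<in> S \<or> e = b"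
proof -
  define F where "F = S \<inter> {a<..b}"
  have "finite F" unfolding F_def by (rule finite_subset[OF _ assms(1)]) auto
  show ?thesis
  proof (cases "F = {}")
    case True
    show ?thesis by (rule that[of b]) (use True assms(2) in \<open>auto simp: F_def\<close>)
  next
    case False
    have "Min F \<in> F" "\<And>u. u \<in> F \<Longrightarrow> Min F \<le> u"
      using Min_in[OF \<open>finite F\<close> False] Min_le[OF \<open>finite F\<close>] by auto
    then show ?thesis by (intro that[of "Min F"]) (fastforce simp: F_def)+
  qed
qed

lemma exp_decay_eq:
  fixes y :: "real \<Rightarrow> real"
  assumes "s \<le> t" "continuous_on {s..t} y"
    and y': "\<And>u. s < u \<Longrightarrow> u < t \<Longrightarrow> (y has_real_derivative - r * y u) (at u)"
  shows "y t = y s * exp (- r * (t - s))"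
proof (cases "s = t")
  case False
  define z where "z u = y u * exp (r * (u - s))" for u
  have "z t = z s"
  proof (rule DERIV_isconst_end[of s t z])
    show "s < t" using assms(1) False by simp
    show "continuous_on {s..t} z" unfolding z_def by (intro continuous_intros assms(2))
    fix u assume "s < u" "u < t"
    have "DERIV z u :> - r * y u * exp (r * (u - s)) + y u * (exp (r * (u - s)) * r)"
      unfolding z_def using y'[OF \<open>s < u\<close> \<open>u < t\<close>] by (auto intro!: derivative_eq_intros)
    then show "DERIV z u :> 0" by (simp add: algebra_simps)
  qed
  then have "y t * exp (r * (t - s)) * exp (- r * (t - s)) = y s * exp (- r * (t - s))"
    by (simp add: z_def)
  then show ?thesis by (simp add: mult.assoc flip: exp_add)
qed simp

lemma artanh_increment_logistic:
  fixes x c G :: "real \<Rightarrow> real"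
  assumes "s \<le> t" "continuous_on {s..t} x" "continuous_on {s..t} G"
    and range: "\<And>u. s \<le> u \<Longrightarrow> u \<le> t \<Longrightarrow> x u \<in> {-1<..<1}"
    and x': "\<And>u. s < u \<Longrightarrow> u < t \<Longrightarrow> (x has_real_derivative c u * (1 - x u) * (1 + x u)) (at u)"
    and G': "\<And>u. s < u \<Longrightarrow> u < t \<Longrightarrow> (G has_real_derivative c u) (at u)"
  shows "artanh (x t) - artanh (x s) = G t - G s"
proof (cases "s = t")
  case False
  define z where "z u = artanh (x u) - G u" for u
  have "z t = z s"
  proof (rule DERIV_isconst_end[of s t z])
    show "s < t" using assms(1) False by simp
    show "continuous_on {s..t} z" unfolding z_def
      by (intro continuous_intros assms(2,3)) (use range in auto)
    fix u assume u: "s < u" "u < t"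
    then have "\<bar>x u\<bar> < 1" using range[of u] by auto
    then have nz: "1 - (x u)\<^sup>2 \<noteq> 0" using abs_square_less_1[of "x u"] by linarith
    have "DERIV z u :> 1 / (1 - (x u)\<^sup>2) * (c u * (1 - x u) * (1 + x u)) - c u"
      unfolding z_def using \<open>\<bar>x u\<bar> < 1\<close> x'[OF u] G'[OF u]
      by (auto intro!: derivative_eq_intros DERIV_chain2[where f = artanh])
    also have "1 / (1 - (x u)\<^sup>2) * (c u * (1 - x u) * (1 + x u)) - c u = 0"
      using nz by (simp add: field_simps power2_eq_square)
    finally show "DERIV z u :> 0" .
  qed
  then show ?thesis by (simp add: z_def)
qed simp

lemma artanh_increment_xfield_decaying_input:
  fixes x :: "real \<Rightarrow> real"
  assumes "r \<noteq> 0" "s \<le> t" "continuous_on {s..t} x"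
    and "\<And>u. s \<le> u \<Longrightarrow> u \<le> t \<Longrightarrow> x u \<in> {-1<..<1}"
    and x': "\<And>u. s < u \<Longrightarrow> u < t \<Longrightarrow>
      (x has_real_derivative xfield sA sS sC muS muC a (Y * exp (- r * (u - s))) (x u)) (at u)"
  shows "artanh (x t) = artanh (x s) + cA sA sS sC muS muC a * (t - s)
    + Y * cB sA sS sC muS muC r a * (exp (- r * (t - s)) - 1)
    + Y\<^sup>2 * cC sS sC r * (exp (- 2 * r * (t - s)) - 1)"
proof -
  define e where "e u = exp (- r * (u - s))" for u
  define c where "c u = (sA * a + sS * (Y * e u - muS)) * sC * (Y * e u + muC)" for u
  \<comment> \<open>an antiderivative of c; this is where cA, cB and cC come from\<close>
  define G where "G u = cA sA sS sC muS muC a * (u - s) + Y * cB sA sS sC muS muC r a * e u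
    + Y\<^sup>2 * cC sS sC r * (e u)\<^sup>2" for u
  have "artanh (x t) - artanh (x s) = G t - G s"
  proof (rule artanh_increment_logistic[OF assms(2,3)])
    show "continuous_on {s..t} G" unfolding G_def e_def by (intro continuous_intros)
    fix u assume "s < u" "u < t"
    show "(x has_real_derivative c u * (1 - x u) * (1 + x u)) (at u)"
      using x'[OF \<open>s < u\<close> \<open>u < t\<close>] by (simp add: xfield_def c_def e_def)
    have "(G has_real_derivative cA sA sS sC muS muC a
        + Y * cB sA sS sC muS muC r a * (e u * - r) + Y\<^sup>2 * cC sS sC r * (2 * e u * (e u * - r))) (at u)"
      unfolding G_def e_def by (auto intro!: derivative_eq_intros)
    also have "cA sA sS sC muS muC a + Y * cB sA sS sC muS muC r a * (e u * - r)
        + Y\<^sup>2 * cC sS sC r * (2 * e u * (e u * - r)) = c u"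
      using \<open>r \<noteq> 0\<close> by (simp add: c_def cA_def cB_def cC_def field_simps power2_eq_square)
    finally show "(G has_real_derivative c u) (at u)" .
  qed (use assms(4) in auto)
  moreover have "(e t)\<^sup>2 = exp (- 2 * r * (t - s))"
    by (simp add: e_def power2_eq_square flip: exp_add)
  ultimately show ?thesis by (simp add: G_def e_def algebra_simps)
qed

lemma cA1_pos:
  "sC > 0 \<Longrightarrow> muC > 0 \<Longrightarrow> sA * a1 - sS * muS > 0 \<Longrightarrow> cA1 sA sS sC muS muC a1 > 0"
  by (simp add: cA1_def)

lemma cT_pos:
  assumes "sC > 0" "muC > 0" "sA * a1 - sS * muS > 0" "tau \<in> {0<..<1}"
  shows "cT sA sS sC muS muC a1 tau > 0"
proof -
  have "artanh tau > 0" using artanh_real_less[of 0 tau] assms(4) by simp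
  with cA1_pos[OF assms(1-3)] show ?thesis by (simp add: cT_def)
qed

locale two_ind_silent_2 =
  fixes sA sS sC muS muC r tau a1 a2 :: real
    and x1 x2 y1 y2 :: "real \<Rightarrow> real" and S1 S2 :: "real set"
  assumes sC: "sC > 0" and muC: "muC > 0" and r: "r > 0" and tau: "tau \<in> {0<..<1}"
    and h1: "sA * a1 - sS * muS > 0"
    and sol: "two_ind_solution sA sS sC muS muC r tau a1 a2 x1 x2 y1 y2 S1 S2"
    and silent_2: "S2 = {}"
begin

abbreviation "T \<equiv> cT sA sS sC muS muC a1 tau"

lemma T_pos: "T > 0"
  using cT_pos sC muC h1 tau .

lemma state_bounds:
  "0 \<le> t \<Longrightarrow> x1 t \<in> {-1<..<1} \<and> x2 t \<in> {-1<..<1} \<and> x1 t < tau \<and> x2 t < tau"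
  using sol by (simp add: two_ind_solution_def)

lemma S1_locally_finite: "finite (S1 \<inter> {..b})"
  using sol by (simp add: two_ind_solution_def)

lemma action_1: "t \<in> S1 \<Longrightarrow> x1 t = 0 \<and> y1 t = 1 \<and> (x1 \<longlongrightarrow> tau) (at_left t)"
  using sol by (simp add: two_ind_solution_def)

lemma derivs_off_S1:
  assumes "0 < u" "u \<notin> S1"
  shows "(x1 has_real_derivative xfield sA sS sC muS muC a1 (y2 u) (x1 u)) (at u)"
    and "(x2 has_real_derivative xfield sA sS sC muS muC a2 (y1 u) (x2 u)) (at u)"
    and "(y1 has_real_derivative (- r * y1 u)) (at u)"
    and "(y2 has_real_derivative (- r * y2 u)) (at u)"
  using sol assms silent_2 by (simp_all add: two_ind_solution_def)

lemma continuous_on_x2_y2: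
  assumes "0 \<le> s"
  shows "continuous_on {s..t} x2" "continuous_on {s..t} y2"
  using sol assms silent_2 unfolding two_ind_solution_def
  by (auto intro!: continuous_on_Icc_if_continuous_right[OF DERIV_continuous])

lemma continuous_on_x1_y1:
  assumes "0 \<le> s" "S1 \<inter> {s<..t} = {}"
  shows "continuous_on {s..t} x1" "continuous_on {s..t} y1"
proof -
  have "u \<notin> S1" if "s < u" "u \<le> t" for u using assms(2) that by auto
  then show "continuous_on {s..t} x1" "continuous_on {s..t} y1"
    using sol assms(1) unfolding two_ind_solution_def
    by (auto intro!: continuous_on_Icc_if_continuous_right[OF DERIV_continuous])
qed

lemma y2_stays_zero:
  assumes "0 \<le> s" "y2 s = 0" "s \<le> t" "S1 \<inter> {s<..<t} = {}"
  shows "y2 t = 0"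
proof -
  have "y2 t = y2 s * exp (- r * (t - s))"
  proof (rule exp_decay_eq)
    fix u assume "s < u" "u < t"
    with assms have "0 < u" "u \<notin> S1" by (auto simp: disjoint_iff)
    then show "(y2 has_real_derivative - r * y2 u) (at u)" by (rule derivs_off_S1)
  qed (use assms continuous_on_x2_y2 in auto)
  with assms(2) show ?thesis by simp
qed

lemma y1_decays:
  assumes "0 \<le> s" "s \<le> t" "S1 \<inter> {s<..t} = {}"
  shows "y1 t = y1 s * exp (- r * (t - s))"
proof (rule exp_decay_eq)
  fix u assume "s < u" "u < t"
  with assms have "0 < u" "u \<notin> S1" by (auto simp: disjoint_iff)
  then show "(y1 has_real_derivative - r * y1 u) (at u)" by (rule derivs_off_S1)
qed (use assms continuous_on_x1_y1 in auto)

lemma artanh_x1_before_action: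
  assumes "0 \<le> s" "x1 s = 0" "y2 s = 0" "s \<le> t" "S1 \<inter> {s<..t} = {}"
  shows "artanh (x1 t) = cA1 sA sS sC muS muC a1 * (t - s)"
proof -
  have "artanh (x1 t) = artanh (x1 s) + cA sA sS sC muS muC a1 * (t - s)
    + 0 * cB sA sS sC muS muC r a1 * (exp (- r * (t - s)) - 1)
    + 0\<^sup>2 * cC sS sC r * (exp (- 2 * r * (t - s)) - 1)"
  proof (rule artanh_increment_xfield_decaying_input)
    show "continuous_on {s..t} x1" using assms continuous_on_x1_y1(1) by blast
    fix u assume "s < u" "u < t"
    then have "S1 \<inter> {s<..<u} = {}" "0 < u" "u \<notin> S1" using assms by (auto simp: disjoint_iff)
    then have "y2 u = 0" using assms \<open>s < u\<close> by (intro y2_stays_zero[of s u]) auto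
    then show "(x1 has_real_derivative xfield sA sS sC muS muC a1 (0 * exp (- r * (u - s))) (x1 u)) (at u)"
      using derivs_off_S1(1)[OF \<open>0 < u\<close> \<open>u \<notin> S1\<close>] by simp
  qed (use r assms state_bounds in auto)
  then show ?thesis using assms(2) by (simp add: cA_def cA1_def)
qed

lemma next_action_1:
  assumes "0 \<le> s" "x1 s = 0" "y2 s = 0"
  shows "s + T \<in> S1" "S1 \<inter> {s<..<s + T} = {}"
proof -
  obtain e where e: "s < e" "e \<le> s + T" "S1 \<inter> {s<..<e} = {}" "e \<in> S1 \<or> e = s + T"
    using first_point_or_bound[OF S1_locally_finite] T_pos by (metis less_add_same_cancel1)
  have artanh_T: "cA1 sA sS sC muS muC a1 * T = artanh tau"
    using T_pos by (auto simp: cT_def field_simps)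
  have "e \<in> S1 \<and> e = s + T"
  proof (cases "e \<in> S1")
    case True
    have "eventually (\<lambda>t. artanh (x1 t) = cA1 sA sS sC muS muC a1 * (t - s)) (at_left e)"
      using eventually_at_left_real[OF \<open>s < e\<close>]
      by eventually_elim (use assms e(3) in \<open>auto intro!: artanh_x1_before_action\<close>)
    then have "((\<lambda>t. artanh (x1 t)) \<longlongrightarrow> cA1 sA sS sC muS muC a1 * (e - s)) (at_left e)"
      by (rule tendsto_cong[THEN iffD2]) (intro tendsto_intros)
    moreover have "((\<lambda>t. artanh (x1 t)) \<longlongrightarrow> artanh tau) (at_left e)"
      using action_1[OF True] tau by (intro tendsto_artanh) auto
    ultimately have "cA1 sA sS sC muS muC a1 * (e - s) = cA1 sA sS sC muS muC a1 * T"
      using tendsto_unique[of "at_left e"] artanh_T by force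
    then show ?thesis using True cA1_pos[OF sC muC h1] by simp
  next
    case False
    then have "e = s + T" using e(4) by simp
    moreover have "S1 \<inter> {s<..e} = {}" using e(3) False by (auto simp: disjoint_iff le_less)
    ultimately have "artanh (x1 e) = artanh tau"
      using artanh_x1_before_action[OF assms, of e] e(1) artanh_T by simp
    moreover have "artanh (x1 e) < artanh tau"
      using state_bounds[of e] assms e tau by (intro artanh_real_less) auto
    ultimately show ?thesis by simp
  qed
  then show "s + T \<in> S1" "S1 \<inter> {s<..<s + T} = {}" using e(3) by auto
qed

lemma period_step:
  assumes "0 \<le> s" "x1 s = 0" "y2 s = 0"
  shows "x1 (s + T) = 0 \<and> y1 (s + T) = 1 \<and> y2 (s + T) = 0 \<and>
    artanh (x2 (s + T)) = artanh (x2 s) + cA sA sS sC muS muC a2 * T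
      + y1 s * cB sA sS sC muS muC r a2 * (exp (- r * T) - 1)
      + (y1 s)\<^sup>2 * cC sS sC r * (exp (- 2 * r * T) - 1)"
proof -
  note action = next_action_1[OF assms]
  have "artanh (x2 (s + T)) = artanh (x2 s) + cA sA sS sC muS muC a2 * (s + T - s)
      + y1 s * cB sA sS sC muS muC r a2 * (exp (- r * (s + T - s)) - 1)
      + (y1 s)\<^sup>2 * cC sS sC r * (exp (- 2 * r * (s + T - s)) - 1)"
  proof (rule artanh_increment_xfield_decaying_input[where x = x2 and s = s and t = "s + T"])
    show "continuous_on {s..s + T} x2" using continuous_on_x2_y2(1) assms(1) .
    fix u assume "s < u" "u < s + T"
    then have "S1 \<inter> {s<..u} = {}" "0 < u" "u \<notin> S1" using action(2) assms(1) by auto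
    then have "y1 u = y1 s * exp (- r * (u - s))"
      using assms(1) \<open>s < u\<close> by (intro y1_decays) auto
    with derivs_off_S1(2)[OF \<open>0 < u\<close> \<open>u \<notin> S1\<close>]
    show "(x2 has_real_derivative
        xfield sA sS sC muS muC a2 (y1 s * exp (- r * (u - s))) (x2 u)) (at u)" by simp
  next
    fix u assume "s \<le> u"
    then show "x2 u \<in> {-1<..<1}" using state_bounds[of u] assms(1) by simp
  qed (use r T_pos in auto)
  moreover have "y2 (s + T) = 0" using action(2) T_pos by (intro y2_stays_zero[OF assms(1,3)]) auto
  ultimately show ?thesis using action_1[OF action(1)] by simp
qed

lemma state_after_periods:
  assumes "x1 0 = 0" "y1 0 = 0" "y2 0 = 0"
  shows "x1 (real (Suc k) * T) = 0 \<and> y1 (real (Suc k) * T) = 1 \<and> y2 (real (Suc k) * T) = 0 \<and>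
    artanh (x2 (real (Suc k) * T))
      = artanh (x2 0) + cA sA sS sC muS muC a2 * T + real k * cM sA sS sC muS muC r tau a1 a2"
proof (induction k)
  case 0
  show ?case using period_step[of 0] assms by simp
next
  case (Suc k)
  define s where "s = real (Suc k) * T"
  have "0 \<le> s" using T_pos by (simp add: s_def)
  have s_T: "real (Suc (Suc k)) * T = s + T" by (simp add: s_def algebra_simps)
  have IH: "x1 s = 0" "y1 s = 1" "y2 s = 0"
    "artanh (x2 s) = artanh (x2 0) + cA sA sS sC muS muC a2 * T + real k * cM sA sS sC muS muC r tau a1 a2"
    using Suc.IH by (simp_all add: s_def)
  have "x1 (s + T) = 0 \<and> y1 (s + T) = 1 \<and> y2 (s + T) = 0 \<and>
      artanh (x2 (s + T)) = artanh (x2 s) + cM sA sS sC muS muC r tau a1 a2"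
    using period_step[OF \<open>0 \<le> s\<close> IH(1,3)] IH(2) by (simp add: cM_def Let_def algebra_simps)
  then show ?case unfolding s_T using IH(4) by (simp add: algebra_simps)
qed

lemma silent_2_absurd:
  assumes "x1 0 = 0" "y1 0 = 0" "y2 0 = 0" "cM sA sS sC muS muC r tau a1 a2 > 0"
  shows False
proof -
  obtain k :: nat where
    "artanh tau - artanh (x2 0) - cA sA sS sC muS muC a2 * T < real k * cM sA sS sC muS muC r tau a1 a2"
    using reals_Archimedean3[OF assms(4)] by blast
  then have "artanh tau < artanh (x2 (real (Suc k) * T))"
    using state_after_periods[OF assms(1-3), of k] by simp
  moreover have "artanh (x2 (real (Suc k) * T)) < artanh tau"
    using state_bounds[of "real (Suc k) * T"] T_pos tau
    by (intro artanh_real_less) auto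
  ultimately show False by simp
qed

end

theorem two_ind_solution_second_acts:
  assumes "sC > 0" "muC > 0" "r > 0" "tau \<in> {0<..<1}" "sA * a1 - sS * muS > 0"
    and "x1 0 = 0" "y1 0 = 0" "y2 0 = 0"
    and "two_ind_solution sA sS sC muS muC r tau a1 a2 x1 x2 y1 y2 S1 S2"
    and "cM sA sS sC muS muC r tau a1 a2 > 0"
  shows "S2 \<noteq> {}"
proof
  assume "S2 = {}"
  then interpret two_ind_silent_2 sA sS sC muS muC r tau a1 a2 x1 x2 y1 y2 S1 S2
    using assms by unfold_locales auto
  show False using silent_2_absurd assms(6-8,10) .
qed

theorem lemma2:
  fixes sA sS sC muS muC r tau a1 a2 :: real
    and x1 x2 y1 y2 :: "real \<Rightarrow> real" and S1 S2 :: "real set"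
  assumes "sA \<ge> 0" "sS \<ge> 0" "sC > 0" "muS \<in> {0..1}" "muC > 0" "r > 0"
    and "tau \<in> {0<..<1}" "a1 \<in> {-1<..<1}" "a2 \<in> {-1<..<1}"
    and h1: "sA * a1 - sS * muS > 0"
    and h2: "sA * a2 - sS * muS \<le> 0"
    and h3: "x1 0 = 0" "y1 0 = 0" "y2 0 = 0" "x2 0 \<in> {-1<..<tau}"
    and sol: "two_ind_solution sA sS sC muS muC r tau a1 a2 x1 x2 y1 y2 S1 S2"
    and Mpos: "cM sA sS sC muS muC r tau a1 a2 > 0"
  shows "\<exists>m::nat. m \<ge> 1 \<and>
     (let T = cT sA sS sC muS muC a1 tau;
          M = cM sA sS sC muS muC r tau a1 a2;
          xstar = - (1 - sqrt (1 - (tanh M)\<^sup>2)) / tanh M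
      in (\<exists>t\<in>S2. 0 < t \<and> t \<le> (real m + 1) * T) \<or>
         (S2 \<inter> {0..real m * T} = {} \<and> x2 (real m * T) > xstar))"
proof -
  obtain t where "t \<in> S2"
    using two_ind_solution_second_acts[OF assms(3,5-7) h1 h3(1-3) sol Mpos] by blast
  moreover have "S2 \<subseteq> {0<..}" using sol by (simp add: two_ind_solution_def)
  ultimately have "t > 0" by auto
  define T where "T = cT sA sS sC muS muC a1 tau"
  have "T > 0" unfolding T_def using cT_pos assms(3,5) h1 assms(7) .
  obtain n :: nat where "t < real n * T" using reals_Archimedean3[OF \<open>T > 0\<close>] by blast
  then have "t \<le> (real (Suc n) + 1) * T" using \<open>T > 0\<close> by (simp add: algebra_simps)
  with \<open>t \<in> S2\<close> \<open>t > 0\<close> show ?thesis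
    unfolding Let_def T_def by (intro exI[of _ "Suc n"] conjI disjI1 bexI[of _ t]) auto
qed

end
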